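(* Let $m$ be any nonzero complex number. Then for every nonnegative integer $n$, \begin{align*} &\sum_{k=0}^n\frac{((256-27m)k^3+384k^2+(176+21m)k-6m+24)\binom{4k}k}{(k+1)m^k} =-6m+\frac{8(2n+1)(4n+1)(4n+3)\binom{4n}n}{(n+1)m^n}, \\&\sum_{k=0}^n\frac{((256-27m)k^3+384k^2+(176+3m)k+24)\binom{4k}k}{(3k+1)m^k} =\frac{8(2n+1)(4n+1)(4n+3)\binom{4n}n}{(3n+1)m^n}, \\&\sum_{k=0}^n\frac{((256-27m)k^3+3(128-9m)k^2+2(88-3m)k+24)\binom{4k}k}{(3k+1)(3k+2)m^k} =\frac{8(2n+1)(4n+1)(4n+3)\binom{4n}n}{(3n+1)(3n+2)m^n}. \end{align*} Consequently, if $|m|>256/27$, then \begin{align*} &\sum_{k=0}^\infty\frac{((256-27m)k^3+384k^2+(176+21m)k-6m+24)\binom{4k}k}{(k+1)m^k}=-6m, \\&\sum_{k=0}^\infty\frac{((256-27m)k^3+384k^2+(176+3m)k+24)\binom{4k}k}{(3k+1)m^k}=0, \\&\sum_{k=0}^\infty\frac{((256-27m)k^3+3(128-9m)k^2+2(88-3m)k+24)\binom{4k}k}{(3k+1)(3k+2)m^k}=0. \end{align*} *)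

theory Defs
  imports Complex_Main
begin

end

theory Submission
  imports Defs "HOL-Analysis.Elementary_Normed_Spaces" "HOL-Real_Asymp.Real_Asymp"
begin

(* The identities are telescoping sums of Gosper type. With u j = g j * (4j choose j) for the
   polynomial certificates g j = 3(3j-2)(3j-1), 3j(3j-1) and 3j respectively, the k-th summand is
   (u (k+1) - m u k) / m^k; this rests on the hypergeometric ratio
   (4k+4 choose k+1) / (4k choose k) = 8(2k+1)(4k+1)(4k+3) / (3(k+1)(3k+1)(3k+2)).
   That ratio is at most 256/27, so (4n choose n) <= (256/27)^n and the closed-form remainder
   tends to 0 when |m| > 256/27. *)

lemma binomial_4n_Suc:
  "3 * (n + 1) * (3 * n + 1) * (3 * n + 2) * (4 * Suc n choose Suc n)
     = 8 * (2 * n + 1) * (4 * n + 1) * (4 * n + 3) * (4 * n choose n)"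
proof -
  define c where "c j = (4 * n + j choose n)" for j
  define c' where "c' = (4 * Suc n choose Suc n)"
  have absorb: "(3 * n + j) * c j = (4 * n + j) * c (j - 1)" if "j > 0" for j
    using binomial_absorb_comp[of "4 * n + j" n] that by (simp add: c_def)
  have "3 * (n + 1) * (3 * n + 1) * (3 * n + 2) * c' = 3 * (3 * n + 1) * (3 * n + 2) * ((n + 1) * c')"
    by (simp only: mult_ac)
  also have "(n + 1) * c' = (4 * n + 4) * c 3"
    using Suc_times_binomial[of n "4 * n + 3"] by (simp add: c_def c'_def)
  also have "3 * (3 * n + 1) * (3 * n + 2) * ((4 * n + 4) * c 3)
      = 4 * (3 * n + 1) * (3 * n + 2) * ((3 * n + 3) * c 3)"
    by (simp add: algebra_simps)
  also have "(3 * n + 3) * c 3 = (4 * n + 3) * c 2"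
    using absorb[of 3] by simp
  also have "4 * (3 * n + 1) * (3 * n + 2) * ((4 * n + 3) * c 2)
      = 4 * (3 * n + 1) * (4 * n + 3) * ((3 * n + 2) * c 2)"
    by (simp only: mult_ac)
  also have "(3 * n + 2) * c 2 = (4 * n + 2) * c 1"
    using absorb[of 2] by simp
  also have "4 * (3 * n + 1) * (4 * n + 3) * ((4 * n + 2) * c 1)
      = 4 * (4 * n + 3) * (4 * n + 2) * ((3 * n + 1) * c 1)"
    by (simp only: mult_ac)
  also have "(3 * n + 1) * c 1 = (4 * n + 1) * c 0"
    using absorb[of 1] by simp
  finally show ?thesis
    by (simp add: c_def c'_def algebra_simps)
qed

lemma of_nat_affine_neq_0:
  "(of_nat k + 1 :: 'a::field_char_0) \<noteq> 0"
  "(3 * of_nat k + 1 :: 'a) \<noteq> 0"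
  "(3 * of_nat k + 2 :: 'a) \<noteq> 0"
  using of_nat_neq_0[of k, where ?'a='a] of_nat_neq_0[of "3 * k", where ?'a='a]
    of_nat_neq_0[of "3 * k + 1", where ?'a='a]
  by (simp_all add: add.commute)

lemma of_nat_binomial_4n_Suc:
  "3 * (of_nat n + 1) * (3 * of_nat n + 1) * (3 * of_nat n + 2)
       * (of_nat (4 * Suc n choose Suc n) :: 'a::comm_semiring_1)
     = 8 * (2 * of_nat n + 1) * (4 * of_nat n + 1) * (4 * of_nat n + 3) * of_nat (4 * n choose n)"
  using arg_cong[OF binomial_4n_Suc, of "of_nat :: nat \<Rightarrow> 'a"]
  by (simp only: of_nat_mult of_nat_add of_nat_numeral of_nat_1)

lemma sum_telescope_geometric:
  fixes u :: "nat \<Rightarrow> 'a::field"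
  assumes "m \<noteq> 0"
  shows "(\<Sum>k=0..n. (u (Suc k) - m * u k) / m ^ k) = u (Suc n) / m ^ n - m * u 0"
proof -
  have "(u (Suc k) - m * u k) / m ^ k = u (Suc k) / m ^ Suc k * m - u k / m ^ k * m" for k
    using assms by (simp add: field_simps)
  then have "(\<Sum>k=0..n. (u (Suc k) - m * u k) / m ^ k)
      = (\<Sum>k=0..n. u (Suc k) / m ^ Suc k * m - u k / m ^ k * m)"
    by simp
  also have "\<dots> = u (Suc n) / m ^ Suc n * m - u 0 / m ^ 0 * m"
    by (rule sum_Suc_diff) simp
  finally show ?thesis
    using assms by simp
qed

lemma sum_binomial_4k_telescope:
  fixes m :: "'a::field_char_0" and g d :: "nat \<Rightarrow> 'a"
  assumes "m \<noteq> 0" and d_nonzero: "\<And>k. d k \<noteq> 0"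
    and g_Suc: "\<And>k. d k * g (Suc k) = 3 * (of_nat k + 1) * (3 * of_nat k + 1) * (3 * of_nat k + 2)"
  shows "(\<Sum>k=0..n. (8 * (2 * of_nat k + 1) * (4 * of_nat k + 1) * (4 * of_nat k + 3)
                        * of_nat (4*k choose k) / d k - m * g k * of_nat (4*k choose k)) / m ^ k)
    = 8 * (2 * of_nat n + 1) * (4 * of_nat n + 1) * (4 * of_nat n + 3) * of_nat (4*n choose n)
        / (d n * m ^ n) - m * g 0"
proof -
  define u where "u j = g j * of_nat (4 * j choose j)" for j
  have "d k * u (Suc k)
      = 8 * (2 * of_nat k + 1) * (4 * of_nat k + 1) * (4 * of_nat k + 3) * of_nat (4*k choose k)" for k
  proof -
    have "d k * u (Suc k)
        = 3 * (of_nat k + 1) * (3 * of_nat k + 1) * (3 * of_nat k + 2) * of_nat (4 * Suc k choose Suc k)"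
      by (simp only: u_def mult.assoc[symmetric] g_Suc)
    also have "\<dots> = 8 * (2 * of_nat k + 1) * (4 * of_nat k + 1) * (4 * of_nat k + 3) * of_nat (4*k choose k)"
      by (rule of_nat_binomial_4n_Suc)
    finally show ?thesis .
  qed
  then have "u (Suc k)
      = 8 * (2 * of_nat k + 1) * (4 * of_nat k + 1) * (4 * of_nat k + 3) * of_nat (4*k choose k) / d k" for k
    using d_nonzero[of k] by (simp add: field_simps)
  then show ?thesis
    using sum_telescope_geometric[OF assms(1), of u n] d_nonzero[of n] by (simp add: u_def field_simps)
qed

lemma sum_binomial_4k_over_k_plus_1:
  fixes m :: "'a::field_char_0"
  assumes "m \<noteq> 0"
  shows "(\<Sum>k=0..n. ((256 - 27*m) * of_nat k ^ 3 + 384 * of_nat k ^ 2 + (176 + 21*m) * of_nat k - 6*m + 24)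
           * of_nat (4*k choose k) / ((of_nat k + 1) * m ^ k))
        = - 6*m + 8 * (2 * of_nat n + 1) * (4 * of_nat n + 1) * (4 * of_nat n + 3) * of_nat (4*n choose n)
              / ((of_nat n + 1) * m ^ n)"
proof -
  let ?g = "\<lambda>j. 3 * (3 * of_nat j - 2) * (3 * of_nat j - 1) :: 'a"
  have "(\<Sum>k=0..n. ((256 - 27*m) * of_nat k ^ 3 + 384 * of_nat k ^ 2 + (176 + 21*m) * of_nat k - 6*m + 24)
           * of_nat (4*k choose k) / ((of_nat k + 1) * m ^ k))
      = (\<Sum>k=0..n. (8 * (2 * of_nat k + 1) * (4 * of_nat k + 1) * (4 * of_nat k + 3) * of_nat (4*k choose k)
              / (of_nat k + 1) - m * ?g k * of_nat (4*k choose k)) / m ^ k)"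
    using of_nat_affine_neq_0(1)[where ?'a='a] assms
    by (intro sum.cong refl) (simp add: field_simps power2_eq_square power3_eq_cube)
  also have "\<dots> = 8 * (2 * of_nat n + 1) * (4 * of_nat n + 1) * (4 * of_nat n + 3) * of_nat (4*n choose n)
              / ((of_nat n + 1) * m ^ n) - m * ?g 0"
    using assms of_nat_affine_neq_0(1)[where ?'a='a]
    by (intro sum_binomial_4k_telescope) (simp_all add: algebra_simps)
  finally show ?thesis
    by simp
qed

lemma sum_binomial_4k_over_3k_plus_1:
  fixes m :: "'a::field_char_0"
  assumes "m \<noteq> 0"
  shows "(\<Sum>k=0..n. ((256 - 27*m) * of_nat k ^ 3 + 384 * of_nat k ^ 2 + (176 + 3*m) * of_nat k + 24)
           * of_nat (4*k choose k) / ((3 * of_nat k + 1) * m ^ k))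
        = 8 * (2 * of_nat n + 1) * (4 * of_nat n + 1) * (4 * of_nat n + 3) * of_nat (4*n choose n)
              / ((3 * of_nat n + 1) * m ^ n)"
proof -
  let ?g = "\<lambda>j. 3 * of_nat j * (3 * of_nat j - 1) :: 'a"
  have "(\<Sum>k=0..n. ((256 - 27*m) * of_nat k ^ 3 + 384 * of_nat k ^ 2 + (176 + 3*m) * of_nat k + 24)
           * of_nat (4*k choose k) / ((3 * of_nat k + 1) * m ^ k))
      = (\<Sum>k=0..n. (8 * (2 * of_nat k + 1) * (4 * of_nat k + 1) * (4 * of_nat k + 3) * of_nat (4*k choose k)
              / (3 * of_nat k + 1) - m * ?g k * of_nat (4*k choose k)) / m ^ k)"
    using of_nat_affine_neq_0(2)[where ?'a='a] assms
    by (intro sum.cong refl) (simp add: field_simps power2_eq_square power3_eq_cube)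
  also have "\<dots> = 8 * (2 * of_nat n + 1) * (4 * of_nat n + 1) * (4 * of_nat n + 3) * of_nat (4*n choose n)
              / ((3 * of_nat n + 1) * m ^ n) - m * ?g 0"
    using assms of_nat_affine_neq_0(2)[where ?'a='a]
    by (intro sum_binomial_4k_telescope) (simp_all add: algebra_simps)
  finally show ?thesis
    by simp
qed

lemma sum_binomial_4k_over_3k_plus_1_3k_plus_2:
  fixes m :: "'a::field_char_0"
  assumes "m \<noteq> 0"
  shows "(\<Sum>k=0..n. ((256 - 27*m) * of_nat k ^ 3 + 3 * (128 - 9*m) * of_nat k ^ 2 + 2 * (88 - 3*m) * of_nat k + 24)
           * of_nat (4*k choose k) / ((3 * of_nat k + 1) * (3 * of_nat k + 2) * m ^ k))
        = 8 * (2 * of_nat n + 1) * (4 * of_nat n + 1) * (4 * of_nat n + 3) * of_nat (4*n choose n)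
              / ((3 * of_nat n + 1) * (3 * of_nat n + 2) * m ^ n)"
proof -
  let ?g = "\<lambda>j. 3 * of_nat j :: 'a"
  have d: "(3 * of_nat k + 1) * (3 * of_nat k + 2) \<noteq> (0 :: 'a)" for k
    using of_nat_affine_neq_0(2,3)[of k, where ?'a='a] by simp
  have "(\<Sum>k=0..n. ((256 - 27*m) * of_nat k ^ 3 + 3 * (128 - 9*m) * of_nat k ^ 2 + 2 * (88 - 3*m) * of_nat k + 24)
           * of_nat (4*k choose k) / ((3 * of_nat k + 1) * (3 * of_nat k + 2) * m ^ k))
      = (\<Sum>k=0..n. (8 * (2 * of_nat k + 1) * (4 * of_nat k + 1) * (4 * of_nat k + 3) * of_nat (4*k choose k)
              / ((3 * of_nat k + 1) * (3 * of_nat k + 2)) - m * ?g k * of_nat (4*k choose k)) / m ^ k)"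
    using d assms
    by (intro sum.cong refl) (simp add: field_simps power2_eq_square power3_eq_cube)
  also have "\<dots> = 8 * (2 * of_nat n + 1) * (4 * of_nat n + 1) * (4 * of_nat n + 3) * of_nat (4*n choose n)
              / ((3 * of_nat n + 1) * (3 * of_nat n + 2) * m ^ n) - m * ?g 0"
    using assms d
    by (intro sum_binomial_4k_telescope) (simp_all add: algebra_simps)
  finally show ?thesis
    by simp
qed

lemma binomial_4n_Suc_le: "27 * (4 * Suc n choose Suc n) \<le> 256 * (4 * n choose n)"
proof -
  define q where "q = 3 * (n + 1) * (3 * n + 1) * (3 * n + 2)"
  have "0 < q"
    by (simp add: q_def)
  have "q * (27 * (4 * Suc n choose Suc n))
      = 27 * (8 * (2 * n + 1) * (4 * n + 1) * (4 * n + 3)) * (4 * n choose n)"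
    using binomial_4n_Suc[of n] by (simp add: q_def)
  also have "\<dots> \<le> (256 * q) * (4 * n choose n)"
    by (intro mult_right_mono) (simp_all add: q_def algebra_simps)
  also have "\<dots> = q * (256 * (4 * n choose n))"
    by simp
  finally show ?thesis
    using \<open>0 < q\<close> by simp
qed

lemma binomial_4n_le: "real (4 * n choose n) \<le> (256 / 27) ^ n"
proof (induction n)
  case (Suc n)
  have "27 * real (4 * Suc n choose Suc n) \<le> 256 * real (4 * n choose n)"
    using binomial_4n_Suc_le[of n] by (metis of_nat_le_iff of_nat_mult of_nat_numeral)
  then have "real (4 * Suc n choose Suc n) \<le> 256 / 27 * real (4 * n choose n)"
    by simp
  also have "\<dots> \<le> (256 / 27) ^ Suc n"
    using Suc.IH by simp
  finally show ?case .
qed simp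

lemma norm_binomial_4n_div_power_le:
  fixes m q :: "'a::real_normed_field"
  assumes "m \<noteq> 0" and "norm q \<ge> 1"
  shows "norm (8 * (2 * of_nat n + 1) * (4 * of_nat n + 1) * (4 * of_nat n + 3) * of_nat (4*n choose n)
              / (q * m ^ n))
    \<le> 8 * (2 * real n + 1) * (4 * real n + 1) * (4 * real n + 3) * (256 / 27) ^ n / norm m ^ n"
proof -
  let ?p = "8 * (2 * real n + 1) * (4 * real n + 1) * (4 * real n + 3)"
  have numerator: "(8 * (2 * of_nat n + 1) * (4 * of_nat n + 1) * (4 * of_nat n + 3) * of_nat (4*n choose n) :: 'a)
      = of_nat (8 * (2 * n + 1) * (4 * n + 1) * (4 * n + 3) * (4*n choose n))"
    by (simp only: of_nat_mult of_nat_add of_nat_numeral of_nat_1)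
  have "norm (8 * (2 * of_nat n + 1) * (4 * of_nat n + 1) * (4 * of_nat n + 3) * of_nat (4*n choose n)
              / (q * m ^ n)) = ?p * real (4 * n choose n) / (norm q * norm m ^ n)"
    unfolding numerator norm_divide norm_mult norm_power norm_of_nat by (simp add: algebra_simps)
  also have "\<dots> \<le> ?p * real (4 * n choose n) / norm m ^ n"
    using assms by (intro divide_left_mono) (auto intro!: mult_pos_pos)
  also have "\<dots> \<le> ?p * (256 / 27) ^ n / norm m ^ n"
    using binomial_4n_le[of n] by (intro divide_right_mono mult_left_mono) auto
  finally show ?thesis .
qed

lemma tendsto_binomial_4n_div_power:
  fixes m :: "'a::real_normed_field" and q :: "nat \<Rightarrow> 'a"
  assumes m: "norm m > 256 / 27" and q: "\<And>n. norm (q n) \<ge> 1"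
  shows "(\<lambda>n. 8 * (2 * of_nat n + 1) * (4 * of_nat n + 1) * (4 * of_nat n + 3) * of_nat (4*n choose n)
              / (q n * m ^ n)) \<longlonglongrightarrow> 0"
proof (rule Lim_null_comparison)
  have "m \<noteq> 0"
    using m by auto
  then show "\<forall>\<^sub>F n in sequentially. norm (8 * (2 * of_nat n + 1) * (4 * of_nat n + 1) * (4 * of_nat n + 3)
      * of_nat (4*n choose n) / (q n * m ^ n))
    \<le> 8 * (2 * real n + 1) * (4 * real n + 1) * (4 * real n + 3) * (256 / 27) ^ n / norm m ^ n"
    using q by (intro always_eventually allI norm_binomial_4n_div_power_le)
  \<comment> \<open>real_asymp accepts a free variable r as parameter, but not the term norm m\<close>
  have "(\<lambda>n. 8 * (2 * real n + 1) * (4 * real n + 1) * (4 * real n + 3) * (256 / 27) ^ n / r ^ n)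
      \<longlonglongrightarrow> 0" if "r > 256 / 27" for r
    using that by real_asymp
  then show "(\<lambda>n. 8 * (2 * real n + 1) * (4 * real n + 1) * (4 * real n + 3) * (256 / 27) ^ n / norm m ^ n)
      \<longlonglongrightarrow> 0"
    using m .
qed

theorem lemma3p6:
  fixes m :: complex
  assumes "m \<noteq> 0"
  shows "(\<forall>n::nat.
      (\<Sum>k=0..n. ((256 - 27*m) * of_nat k ^ 3 + 384 * of_nat k ^ 2 + (176 + 21*m) * of_nat k - 6*m + 24)
           * of_nat (4*k choose k) / ((of_nat k + 1) * m ^ k))
        = - 6*m + 8 * (2 * of_nat n + 1) * (4 * of_nat n + 1) * (4 * of_nat n + 3) * of_nat (4*n choose n)
              / ((of_nat n + 1) * m ^ n)
    \<and> (\<Sum>k=0..n. ((256 - 27*m) * of_nat k ^ 3 + 384 * of_nat k ^ 2 + (176 + 3*m) * of_nat k + 24)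
           * of_nat (4*k choose k) / ((3 * of_nat k + 1) * m ^ k))
        = 8 * (2 * of_nat n + 1) * (4 * of_nat n + 1) * (4 * of_nat n + 3) * of_nat (4*n choose n)
              / ((3 * of_nat n + 1) * m ^ n)
    \<and> (\<Sum>k=0..n. ((256 - 27*m) * of_nat k ^ 3 + 3 * (128 - 9*m) * of_nat k ^ 2 + 2 * (88 - 3*m) * of_nat k + 24)
           * of_nat (4*k choose k) / ((3 * of_nat k + 1) * (3 * of_nat k + 2) * m ^ k))
        = 8 * (2 * of_nat n + 1) * (4 * of_nat n + 1) * (4 * of_nat n + 3) * of_nat (4*n choose n)
              / ((3 * of_nat n + 1) * (3 * of_nat n + 2) * m ^ n))
    \<and> (norm m > 256 / 27 \<longrightarrow>
        ((\<lambda>k. ((256 - 27*m) * of_nat k ^ 3 + 384 * of_nat k ^ 2 + (176 + 21*m) * of_nat k - 6*m + 24)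
           * of_nat (4*k choose k) / ((of_nat k + 1) * m ^ k)) sums (- 6*m))
      \<and> ((\<lambda>k. ((256 - 27*m) * of_nat k ^ 3 + 384 * of_nat k ^ 2 + (176 + 3*m) * of_nat k + 24)
           * of_nat (4*k choose k) / ((3 * of_nat k + 1) * m ^ k)) sums 0)
      \<and> ((\<lambda>k. ((256 - 27*m) * of_nat k ^ 3 + 3 * (128 - 9*m) * of_nat k ^ 2 + 2 * (88 - 3*m) * of_nat k + 24)
           * of_nat (4*k choose k) / ((3 * of_nat k + 1) * (3 * of_nat k + 2) * m ^ k)) sums 0))"
proof -
  have denominators:
    "1 \<le> norm (of_nat n + 1 :: complex)"
    "1 \<le> norm (3 * of_nat n + 1 :: complex)"
    "1 \<le> norm ((3 * of_nat n + 1) * (3 * of_nat n + 2) :: complex)" for n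
    using norm_of_nat[of "Suc n", where ?'a=complex] norm_of_nat[of "3 * n + 1", where ?'a=complex]
      norm_of_nat[of "(3 * n + 1) * (3 * n + 2)", where ?'a=complex]
    by (simp_all add: algebra_simps)
  show ?thesis
    unfolding sums_def_le atMost_atLeast0 sum_binomial_4k_over_k_plus_1[OF assms]
      sum_binomial_4k_over_3k_plus_1[OF assms] sum_binomial_4k_over_3k_plus_1_3k_plus_2[OF assms]
    using tendsto_add[OF tendsto_const[of "- 6 * m"]
        tendsto_binomial_4n_div_power[where q = "\<lambda>n. of_nat n + 1", OF _ denominators(1)]]
      tendsto_binomial_4n_div_power[where q = "\<lambda>n. 3 * of_nat n + 1", OF _ denominators(2)]
      tendsto_binomial_4n_div_power[where q = "\<lambda>n. (3 * of_nat n + 1) * (3 * of_nat n + 2)",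
        OF _ denominators(3)]
    by simp
qed

end
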